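(* If $G$ is an $\alpha_i$-metric graph ($i\ge 0$ an integer), then its interval thinness is at most $i+1$; that is, for all vertices $u,v$ and every integer $k$ with $0<k<d(u,v)$, any two vertices $x,y\in I(u,v)$ with $d(u,x)=d(u,y)=k$ satisfy $d(x,y)\le i+1$.
   Context: All graphs are finite, connected, unweighted, undirected, simple; $d(u,v)$ is the shortest-path distance. $I(u,v)=\{x: d(u,x)+d(x,v)=d(u,v)\}$. A graph is $\alpha_i$-metric if for all vertices $u,v,w,x$: whenever $v\in I(u,w)$, $w\in I(v,x)$ and $v,w$ are adjacent, then $d(u,x)\ge d(u,v)+d(v,x)-i$. *)

theory Defs
  imports Main
begin

definition simple_graph :: "'a set \<Rightarrow> ('a \<Rightarrow> 'a \<Rightarrow> bool) \<Rightarrow> bool" where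
  "simple_graph V E \<longleftrightarrow> finite V \<and> V \<noteq> {} \<and>
     (\<forall>x y. E x y \<longrightarrow> x \<in> V \<and> y \<in> V) \<and>
     (\<forall>x y. E x y \<longrightarrow> E y x) \<and> (\<forall>x. \<not> E x x)"

fun walk :: "('a \<Rightarrow> 'a \<Rightarrow> bool) \<Rightarrow> 'a list \<Rightarrow> bool" where
  "walk E [] = False"
| "walk E [x] = True"
| "walk E (x # y # xs) = (E x y \<and> walk E (y # xs))"

definition walk_of_len :: "('a \<Rightarrow> 'a \<Rightarrow> bool) \<Rightarrow> 'a \<Rightarrow> 'a \<Rightarrow> nat \<Rightarrow> bool" where
  "walk_of_len E u v n \<longleftrightarrow> (\<exists>xs. walk E xs \<and> hd xs = u \<and> last xs = v \<and> length xs = Suc n)"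

definition connected_graph :: "'a set \<Rightarrow> ('a \<Rightarrow> 'a \<Rightarrow> bool) \<Rightarrow> bool" where
  "connected_graph V E \<longleftrightarrow> (\<forall>u\<in>V. \<forall>v\<in>V. \<exists>n. walk_of_len E u v n)"

text \<open>Shortest-path distance (meaningful for vertices of a connected graph).\<close>
definition dist :: "('a \<Rightarrow> 'a \<Rightarrow> bool) \<Rightarrow> 'a \<Rightarrow> 'a \<Rightarrow> nat" where
  "dist E u v = (LEAST n. walk_of_len E u v n)"

definition interval :: "'a set \<Rightarrow> ('a \<Rightarrow> 'a \<Rightarrow> bool) \<Rightarrow> 'a \<Rightarrow> 'a \<Rightarrow> 'a set" where
  "interval V E u v = {x\<in>V. dist E u x + dist E x v = dist E u v}"

definition alpha_metric :: "nat \<Rightarrow> 'a set \<Rightarrow> ('a \<Rightarrow> 'a \<Rightarrow> bool) \<Rightarrow> bool" where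
  "alpha_metric i V E \<longleftrightarrow>
     (\<forall>u\<in>V. \<forall>v\<in>V. \<forall>w\<in>V. \<forall>x\<in>V.
        v \<in> interval V E u w \<and> w \<in> interval V E v x \<and> E v w \<longrightarrow>
        int (dist E u x) \<ge> int (dist E u v) + int (dist E v x) - int i)"

end

theory Submission
  imports Defs
begin

text \<open>Induction on the common distance of a and b to v. Vertices a, b of I(u,v) on one level
from u have neighbours a', b' in I(u,v) one level further, so inductively d(a',b') \<le> i + 1.
If h = d(a,b) > i + 1, then d(a',b) is h - 1, h + 1 or h. The alpha_i-metric inequality for the
edge a a' (with base points u and b, resp. b and v) gives h \<le> i in the first two cases; in
the third, d(a',b') = h - 1 and the inequality for the edge b b' gives h \<le> i + 1.\<close>

lemma walk_append:
  "walk E xs \<Longrightarrow> walk E ys \<Longrightarrow> last xs = hd ys \<Longrightarrow> walk E (xs @ tl ys)"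
proof (induction E xs rule: walk.induct)
  case (2 E x)
  then show ?case
    by (cases ys) auto
qed auto

lemma walk_rev:
  "\<forall>x y. E x y \<longrightarrow> E y x \<Longrightarrow> walk E xs \<Longrightarrow> walk E (rev xs)"
proof (induction E xs rule: walk.induct)
  case (3 E x y xs)
  then have "walk E (rev (y # xs))" and "walk E [y, x]"
    by auto
  from walk_append[OF this] show ?case
    by simp
qed simp_all

lemma walk_of_len_trans:
  assumes "walk_of_len E a b n" and "walk_of_len E b c m"
  shows "walk_of_len E a c (n + m)"
proof -
  obtain xs where xs: "walk E xs" "hd xs = a" "last xs = b" "length xs = Suc n"
    using assms(1) unfolding walk_of_len_def by blast
  obtain ys where ys: "walk E ys" "hd ys = b" "last ys = c" "length ys = Suc m"
    using assms(2) unfolding walk_of_len_def by blast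
  have "walk E (xs @ tl ys)"
    using walk_append xs ys by metis
  moreover have "hd (xs @ tl ys) = a" and "last (xs @ tl ys) = c"
    using xs ys by (cases xs; cases ys; auto)+
  moreover have "length (xs @ tl ys) = Suc (n + m)"
    using xs ys by simp
  ultimately show ?thesis
    unfolding walk_of_len_def by blast
qed

lemma walk_of_len_sym:
  assumes "\<forall>x y. E x y \<longrightarrow> E y x" and "walk_of_len E a b n"
  shows "walk_of_len E b a n"
proof -
  obtain xs where xs: "walk E xs" "hd xs = a" "last xs = b" "length xs = Suc n"
    using assms(2) unfolding walk_of_len_def by blast
  then have "hd (rev xs) = b" and "last (rev xs) = a"
    by (auto simp: hd_rev last_rev)
  then show ?thesis
    unfolding walk_of_len_def using walk_rev[OF assms(1) xs(1)] xs(4) by auto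
qed

lemma dist_le_walk_of_len: "walk_of_len E a b n \<Longrightarrow> dist E a b \<le> n"
  unfolding dist_def by (rule Least_le)

lemma dist_self [simp]: "dist E a a = 0"
proof -
  have "walk_of_len E a a 0"
    unfolding walk_of_len_def by (intro exI[of _ "[a]"]) simp
  then show ?thesis
    using dist_le_walk_of_len by fastforce
qed

locale connected_simple_graph =
  fixes V :: "'a set" and E :: "'a \<Rightarrow> 'a \<Rightarrow> bool"
  assumes simple: "simple_graph V E" and connected: "connected_graph V E"
begin

lemma edge_sym: "E a b \<Longrightarrow> E b a"
  using simple unfolding simple_graph_def by blast

lemma edge_in_V: "E a b \<Longrightarrow> a \<in> V \<and> b \<in> V"
  using simple unfolding simple_graph_def by blast

lemma walk_of_len_dist: "a \<in> V \<Longrightarrow> b \<in> V \<Longrightarrow> walk_of_len E a b (dist E a b)"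
  using connected unfolding connected_graph_def dist_def by (blast intro: LeastI_ex)

lemma dist_eq_0_iff:
  assumes "a \<in> V" and "b \<in> V"
  shows "dist E a b = 0 \<longleftrightarrow> a = b"
  using walk_of_len_dist[OF assms] by (auto simp: walk_of_len_def length_Suc_conv)

lemma dist_triangle:
  "a \<in> V \<Longrightarrow> b \<in> V \<Longrightarrow> c \<in> V \<Longrightarrow> dist E a c \<le> dist E a b + dist E b c"
  by (metis dist_le_walk_of_len walk_of_len_dist walk_of_len_trans)

lemma dist_commute: "a \<in> V \<Longrightarrow> b \<in> V \<Longrightarrow> dist E a b = dist E b a"
  by (metis antisym edge_sym dist_le_walk_of_len walk_of_len_dist walk_of_len_sym)

lemma dist_edge:
  assumes "E a b"
  shows "dist E a b = 1"
proof -
  have "walk_of_len E a b 1"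
    unfolding walk_of_len_def using assms by (intro exI[of _ "[a, b]"]) simp
  moreover have "a \<noteq> b"
    using assms simple unfolding simple_graph_def by blast
  ultimately show ?thesis
    using dist_le_walk_of_len[of E a b 1] dist_eq_0_iff edge_in_V[OF assms] by fastforce
qed

lemma dist_edge_le:
  assumes "E a a'" and "b \<in> V"
  shows "dist E a b \<le> dist E a' b + 1" and "dist E a' b \<le> dist E a b + 1"
  using dist_triangle[of a a' b] dist_triangle[of a' a b] dist_edge[OF assms(1)]
    dist_edge[OF edge_sym[OF assms(1)]] edge_in_V[OF assms(1)] assms(2)
  by auto

lemma dist_Suc_obtain_neighbour:
  assumes "a \<in> V" and "b \<in> V" and "dist E a b = Suc m"
  obtains c where "E a c" and "dist E c b = m"
proof -
  obtain xs where xs: "walk E xs" "hd xs = a" "last xs = b" "length xs = Suc (Suc m)"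
    using walk_of_len_dist[OF assms(1,2)] assms(3) unfolding walk_of_len_def by auto
  then obtain c ys where xs_eq: "xs = a # c # ys"
    by (cases xs; cases "tl xs") auto
  have "E a c"
    using xs(1) xs_eq by simp
  have "walk_of_len E c b m"
    unfolding walk_of_len_def using xs xs_eq by (intro exI[of _ "c # ys"]) auto
  then have "dist E c b \<le> m"
    by (rule dist_le_walk_of_len)
  moreover have "Suc m \<le> 1 + dist E c b"
    using dist_triangle[OF assms(1) _ assms(2), of c] dist_edge[OF \<open>E a c\<close>]
      edge_in_V[OF \<open>E a c\<close>] assms(3) by simp
  ultimately show thesis
    using that \<open>E a c\<close> by simp
qed

lemma interval_obtain_successor:
  assumes "x \<in> interval V E u v" and "u \<in> V" and "v \<in> V" and "dist E x v = Suc m"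
  obtains x' where "E x x'" and "x' \<in> interval V E u v"
    and "dist E u x' = dist E u x + 1" and "dist E x' v = m"
proof -
  have "x \<in> V" and x_geodesic: "dist E u x + dist E x v = dist E u v"
    using assms(1) unfolding interval_def by auto
  obtain x' where "E x x'" and "dist E x' v = m"
    using dist_Suc_obtain_neighbour[OF \<open>x \<in> V\<close> assms(3,4)] by blast
  moreover have "x' \<in> V"
    using edge_in_V[OF \<open>E x x'\<close>] by blast
  moreover have "dist E u x' = dist E u x + 1"
    using dist_triangle[OF assms(2) \<open>x \<in> V\<close> \<open>x' \<in> V\<close>]
      dist_triangle[OF assms(2) \<open>x' \<in> V\<close> assms(3)]
      dist_edge[OF \<open>E x x'\<close>] \<open>dist E x' v = m\<close> assms(4) x_geodesic by simp
  ultimately show thesis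
    using that x_geodesic assms(4) by (simp add: interval_def)
qed

end

locale alpha_metric_graph = connected_simple_graph +
  fixes i :: nat
  assumes alpha_metric: "alpha_metric i V E"
begin

lemma alpha_metric_edge:
  assumes "u \<in> V" and "x \<in> V" and "E v w"
    and "dist E u v + 1 = dist E u w" and "dist E w x + 1 = dist E v x"
  shows "dist E u v + dist E v x \<le> dist E u x + i"
proof -
  have "v \<in> V" and "w \<in> V"
    using edge_in_V[OF assms(3)] by auto
  have "v \<in> interval V E u w" and "w \<in> interval V E v x"
    using assms dist_edge[OF assms(3)] dist_edge[OF edge_sym[OF assms(3)]] \<open>v \<in> V\<close> \<open>w \<in> V\<close>
    by (simp_all add: interval_def)
  then show ?thesis
    using alpha_metric assms(1-3) \<open>v \<in> V\<close> \<open>w \<in> V\<close> unfolding alpha_metric_def by fastforce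
qed

lemma level_dist_le_if_successors_close:
  assumes V: "u \<in> V" "v \<in> V" "a \<in> V" "b \<in> V"
    and "E a a'" and "E b b'"
    and level: "dist E u a = dist E u b"
    and a'_level: "dist E u a' = dist E u a + 1" and b'_level: "dist E u b' = dist E u b + 1"
    and co_level: "dist E a v = dist E b v" and a'_co_level: "dist E a' v + 1 = dist E a v"
    and successors_close: "dist E a' b' \<le> i + 1"
  shows "dist E a b \<le> i + 1"
proof (rule ccontr)
  assume far: "\<not> dist E a b \<le> i + 1"
  have "a' \<in> V" and "b' \<in> V"
    using edge_in_V \<open>E a a'\<close> \<open>E b b'\<close> by auto
  consider "dist E a' b + 1 = dist E a b" | "dist E a' b = dist E a b + 1"
    | "dist E a' b = dist E a b"
    using dist_edge_le[OF \<open>E a a'\<close> V(4)] by linarith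
  then show False
  proof cases
    case 1
    then show False
      using alpha_metric_edge[OF V(1,4) \<open>E a a'\<close> _ 1] a'_level level far by simp
  next
    case 2
    then have "dist E b a + 1 = dist E b a'"
      using dist_commute V(3,4) \<open>a' \<in> V\<close> by simp
    then show False
      using alpha_metric_edge[OF V(4,2) \<open>E a a'\<close> _ a'_co_level] co_level far
        dist_commute[OF V(3,4)] by simp
  next
    case 3
    have "dist E b a' \<le> dist E b' a' + 1"
      using dist_edge_le(1)[OF \<open>E b b'\<close> \<open>a' \<in> V\<close>] .
    then have b'_between: "dist E b' a' + 1 = dist E b a'"
      using 3 successors_close far dist_commute V(4) \<open>a' \<in> V\<close> \<open>b' \<in> V\<close> by simp
    show False
      using alpha_metric_edge[OF V(1) \<open>a' \<in> V\<close> \<open>E b b'\<close> _ b'_between]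
        b'_level a'_level level far 3
        dist_commute[OF V(4) \<open>a' \<in> V\<close>] by simp
  qed
qed

lemma interval_level_dist_le:
  assumes "u \<in> V" and "v \<in> V"
    and "a \<in> interval V E u v" and "b \<in> interval V E u v"
    and "dist E u a = dist E u b"
  shows "dist E a b \<le> i + 1"
  using assms(3-5)
proof (induction "dist E a v" arbitrary: a b)
  case 0
  then have "a = v" and "b = v"
    using dist_eq_0_iff assms(2) unfolding interval_def by auto
  then show ?case
    by simp
next
  case (Suc m)
  have "a \<in> V" and "b \<in> V"
    using Suc.prems unfolding interval_def by auto
  have co_level: "dist E a v = dist E b v"
    using Suc.prems unfolding interval_def by auto
  obtain a' where a': "E a a'" "a' \<in> interval V E u v" "dist E u a' = dist E u a + 1"
    "dist E a' v = m"
    using interval_obtain_successor[OF Suc.prems(1) assms(1,2) Suc.hyps(2)[symmetric]] .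
  obtain b' where b': "E b b'" "b' \<in> interval V E u v" "dist E u b' = dist E u b + 1"
    using interval_obtain_successor[OF Suc.prems(2) assms(1,2)] Suc.hyps(2) co_level by metis
  have "dist E a' b' \<le> i + 1"
    using Suc.hyps(1)[OF a'(4)[symmetric] a'(2) b'(2)] a'(3) b'(3) Suc.prems(3) by simp
  then show ?case
    using level_dist_le_if_successors_close[OF assms(1,2) \<open>a \<in> V\<close> \<open>b \<in> V\<close> a'(1) b'(1)]
      Suc.prems(3) a'(3) b'(3) co_level a'(4) Suc.hyps(2) by simp
qed

end

theorem lemma2:
  fixes V :: "'a set" and E :: "'a \<Rightarrow> 'a \<Rightarrow> bool" and i :: nat
  assumes "simple_graph V E" and "connected_graph V E"
    and "alpha_metric i V E"
    and "u \<in> V" and "v \<in> V"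
    and "0 < k" and "k < dist E u v"
    and "x \<in> interval V E u v" and "y \<in> interval V E u v"
    and "dist E u x = k" and "dist E u y = k"
  shows "dist E x y \<le> i + 1"
proof -
  interpret alpha_metric_graph V E i
    using assms(1-3) by unfold_locales
  show ?thesis
    using interval_level_dist_le[OF assms(4,5,8,9)] assms(10,11) by simp
qed

end
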